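(* For every integer $m\geq 1$ and every real $x>0$, $$\frac{x}{2m^2(1+\sqrt{x})^3}(1+\sqrt{x})^{2m}\leq \beta_m(x)\leq (1+\sqrt{x})^{2m},$$ where $\beta_m(x)=\sum_{\ell=1}^m N(m,\ell)x^\ell$ and $N(m,\ell)=\frac{1}{m}\binom{m}{\ell-1}\binom{m}{\ell}$. *)

theory Defs
  imports Complex_Main
begin

definition narayana :: "nat \<Rightarrow> nat \<Rightarrow> real" where
  "narayana m l = (1 / real m) * real (m choose (l - 1)) * real (m choose l)"

definition beta :: "nat \<Rightarrow> real \<Rightarrow> real" where
  "beta m x = (\<Sum>l = 1..m. narayana m l * x ^ l)"

end

theory Submission
  imports Defs
begin

text \<open>
  Put \<open>x = s\<^sup>2\<close>. Then \<open>m \<beta>\<^sub>m(s\<^sup>2) / s = \<Sum>\<^sub>k C(m,k) C(m,k+1) s\<^sup>2\<^sup>k\<^sup>+\<^sup>1\<close>,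
  and \<open>N(m,l) \<le> C(m,l)\<^sup>2\<close> bounds \<open>\<beta>\<^sub>m(s\<^sup>2)\<close> by the squares of the terms of
  \<open>(1+s)\<^sup>m = \<Sum>\<^sub>i C(m,i) s\<^sup>i\<close>, hence by \<open>(1+s)\<^sup>2\<^sup>m\<close>.
  For the lower bound, \<open>(1+s)\<^sup>2\<^sup>m - (1-s)\<^sup>2\<^sup>m\<close> is twice the sum of the products
  \<open>C(m,i) C(m,j) s\<^sup>i\<^sup>+\<^sup>j\<close> with \<open>i + j\<close> odd. By log-concavity of the binomial
  coefficients each such product is at most the adjacent product \<open>C(m,k) C(m,k+1) s\<^sup>2\<^sup>k\<^sup>+\<^sup>1\<close>
  with \<open>2k+1 = i+j\<close>, and for fixed \<open>i\<close> distinct \<open>j\<close> give distinct \<open>k\<close>; so the difference is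
  at most \<open>2(m+1) m \<beta>\<^sub>m(s\<^sup>2) / s\<close>, while it is at least \<open>4s(1+s)\<^sup>2\<^sup>m\<^sup>-\<^sup>2\<close>.
\<close>

lemma Suc_times_binomial_Suc: "Suc k * (m choose Suc k) = (m - k) * (m choose k)"
  using times_binomial_minus1_eq[of "Suc k" m] binomial_absorb_comp[of m k] by simp

lemma binomial_mult_le_shift:
  assumes "i + 2 \<le> j"
  shows "(m choose i) * (m choose j) \<le> (m choose Suc i) * (m choose (j - 1))"
proof (cases "j \<le> m")
  case False
  then show ?thesis by (simp add: binomial_eq_0)
next
  case True
  have up: "Suc i * (m choose Suc i) = (m - i) * (m choose i)"
    by (rule Suc_times_binomial_Suc)
  have down: "j * (m choose j) = (m - (j - 1)) * (m choose (j - 1))"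
    using Suc_times_binomial_Suc[of "j - 1" m] assms by simp
  have "((m choose i) * (m choose j)) * ((m - i) * j)
        = (Suc i * (m choose Suc i)) * (j * (m choose j))"
    using up by (simp add: algebra_simps)
  also have "\<dots> = (Suc i * (m - (j - 1))) * ((m choose Suc i) * (m choose (j - 1)))"
    using down by (simp add: algebra_simps)
  also have "\<dots> \<le> (j * (m - i)) * ((m choose Suc i) * (m choose (j - 1)))"
    using assms by (intro mult_right_mono mult_mono) auto
  finally have "((m choose i) * (m choose j)) * ((m - i) * j)
      \<le> ((m choose Suc i) * (m choose (j - 1))) * ((m - i) * j)"
    by (simp add: mult.commute)
  moreover have "(m - i) * j > 0"
    using assms True by simp
  ultimately show ?thesis
    by simp
qed

lemma binomial_mult_le_central:
  assumes "i + j = 2 * k + 1"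
  shows "(m choose i) * (m choose j) \<le> (m choose k) * (m choose Suc k)"
proof -
  have spread: "(m choose (k - d)) * (m choose (Suc k + d)) \<le> (m choose k) * (m choose Suc k)"
    if "d \<le> k" for d
    using that
  proof (induction d)
    case 0
    then show ?case by simp
  next
    case (Suc d)
    have "(m choose (k - Suc d)) * (m choose (Suc k + Suc d))
          \<le> (m choose Suc (k - Suc d)) * (m choose (Suc k + Suc d - 1))"
      by (rule binomial_mult_le_shift) simp
    also have "\<dots> = (m choose (k - d)) * (m choose (Suc k + d))"
      using Suc.prems by (simp add: Suc_diff_Suc)
    finally show ?case
      using Suc by simp
  qed
  show ?thesis
  proof (cases "i \<le> j")
    case True
    then have "i \<le> k" "j = Suc k + (k - i)"
      using assms by arith+
    then show ?thesis
      using spread[of "k - i"] by simp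
  next
    case False
    then have "j \<le> k" "i = Suc k + (k - j)"
      using assms by arith+
    then show ?thesis
      using spread[of "k - j"] by (simp add: mult.commute)
  qed
qed

lemma sum_squares_le_square_sum:
  fixes a :: "'b \<Rightarrow> 'a::linordered_semidom"
  assumes "\<And>i. i \<in> A \<Longrightarrow> a i \<ge> 0"
  shows "(\<Sum>i\<in>A. a i ^ 2) \<le> (\<Sum>i\<in>A. a i) ^ 2"
proof (cases "finite A")
  case True
  have "(\<Sum>i\<in>A. a i ^ 2) \<le> (\<Sum>i\<in>A. \<Sum>j\<in>A. a i * a j)"
  proof (rule sum_mono)
    fix i assume "i \<in> A"
    then have "a i * a i \<le> (\<Sum>j\<in>A. a i * a j)"
      using True assms by (intro member_le_sum[of i A "\<lambda>j. a i * a j"]) auto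
    then show "a i ^ 2 \<le> (\<Sum>j\<in>A. a i * a j)"
      by (simp add: power2_eq_square)
  qed
  also have "\<dots> = (\<Sum>i\<in>A. a i) ^ 2"
    by (simp add: power2_eq_square sum_product)
  finally show ?thesis .
qed simp

lemma one_plus_power_binomial:
  "(1 + s) ^ n = (\<Sum>k\<le>n. of_nat (n choose k) * s ^ k :: 'a::comm_semiring_1)"
  using binomial_ring[of s 1 n] by (simp add: add.commute)

definition adjacent_binomial_poly :: "nat \<Rightarrow> real \<Rightarrow> real" where
  "adjacent_binomial_poly m s = (\<Sum>k<m. real ((m choose k) * (m choose Suc k)) * s ^ (2 * k + 1))"

lemma adjacent_binomial_poly_nonneg: "s \<ge> 0 \<Longrightarrow> adjacent_binomial_poly m s \<ge> 0"
  unfolding adjacent_binomial_poly_def by (intro sum_nonneg) simp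

lemma beta_square_eq: "beta m (s ^ 2) = s / real m * adjacent_binomial_poly m s"
  unfolding beta_def adjacent_binomial_poly_def sum_distrib_left
  by (simp add: sum.atLeast1_atMost_eq narayana_def power_mult[symmetric] field_simps)

lemma narayana_le_binomial_square:
  assumes "1 \<le> l" "l \<le> m"
  shows "narayana m l \<le> real (m choose l) ^ 2"
proof -
  have "l * (m choose l) = (m - (l - 1)) * (m choose (l - 1))"
    using Suc_times_binomial_Suc[of "l - 1" m] assms by simp
  moreover have "m - (l - 1) \<ge> 1"
    using assms by simp
  ultimately have "m choose (l - 1) \<le> l * (m choose l)"
    by (metis mult_le_mono1 mult_1)
  also have "\<dots> \<le> m * (m choose l)"
    using assms by simp
  finally have "real (m choose (l - 1)) * real (m choose l) \<le> real m * real (m choose l) ^ 2"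
    by (simp add: power2_eq_square mult_right_mono flip: of_nat_mult)
  then show ?thesis
    using assms by (simp add: narayana_def field_simps)
qed

lemma beta_square_le:
  assumes "s \<ge> 0"
  shows "beta m (s ^ 2) \<le> (1 + s) ^ (2 * m)"
proof -
  define a where "a l = real (m choose l) * s ^ l" for l
  have "beta m (s ^ 2) \<le> (\<Sum>l=1..m. a l ^ 2)"
    unfolding beta_def
  proof (rule sum_mono)
    fix l assume "l \<in> {1..m}"
    then have "narayana m l * (s ^ 2) ^ l \<le> real (m choose l) ^ 2 * (s ^ 2) ^ l"
      by (intro mult_right_mono narayana_le_binomial_square) auto
    moreover have "a l ^ 2 = real (m choose l) ^ 2 * (s ^ 2) ^ l"
      by (simp add: a_def power_mult_distrib flip: power_mult) (simp add: mult.commute)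
    ultimately show "narayana m l * (s ^ 2) ^ l \<le> a l ^ 2"
      by simp
  qed
  also have "\<dots> \<le> (\<Sum>l\<le>m. a l ^ 2)"
    by (rule sum_mono2) auto
  also have "\<dots> \<le> (\<Sum>l\<le>m. a l) ^ 2"
    using assms by (intro sum_squares_le_square_sum) (simp add: a_def)
  also have "\<dots> = (1 + s) ^ (2 * m)"
    by (simp add: a_def one_plus_power_binomial power_mult mult.commute)
  finally show ?thesis .
qed

lemma plus_minus_power_diff_eq_odd_pairs:
  fixes s :: real
  shows "(1 + s) ^ (2 * m) - (1 - s) ^ (2 * m)
    = 2 * (\<Sum>i\<le>m. \<Sum>j\<in>{j\<in>{..m}. odd (i + j)}. real ((m choose i) * (m choose j)) * s ^ (i + j))"
proof -
  define c where "c i j = real ((m choose i) * (m choose j)) * s ^ (i + j)" for i j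
  have "(1 + s) ^ (2 * m) = (1 + s) ^ m * (1 + s) ^ m"
    by (simp add: mult_2 power_add)
  also have "\<dots> = (\<Sum>i\<le>m. \<Sum>j\<le>m. c i j)"
    unfolding one_plus_power_binomial sum_product
    by (intro sum.cong refl) (simp add: c_def power_add)
  finally have plus: "(1 + s) ^ (2 * m) = (\<Sum>i\<le>m. \<Sum>j\<le>m. c i j)" .
  have "(1 - s) ^ (2 * m) = (1 + (- s)) ^ m * (1 + (- s)) ^ m"
    by (simp add: mult_2 power_add)
  also have "\<dots> = (\<Sum>i\<le>m. \<Sum>j\<le>m. (- 1) ^ (i + j) * c i j)"
    unfolding one_plus_power_binomial sum_product
    by (intro sum.cong refl) (simp add: c_def power_add power_minus[of s])
  finally have minus: "(1 - s) ^ (2 * m) = (\<Sum>i\<le>m. \<Sum>j\<le>m. (- 1) ^ (i + j) * c i j)" .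
  have "(1 + s) ^ (2 * m) - (1 - s) ^ (2 * m)
      = (\<Sum>i\<le>m. \<Sum>j\<le>m. 2 * (if odd (i + j) then c i j else 0))"
    unfolding plus minus sum_subtractf[symmetric]
    by (intro sum.cong refl) simp
  also have "\<dots> = 2 * (\<Sum>i\<le>m. \<Sum>j\<in>{j\<in>{..m}. odd (i + j)}. c i j)"
    by (simp only: sum_distrib_left sum.inter_filter[OF finite_atMost])
  finally show ?thesis
    by (simp add: c_def)
qed

lemma odd_pairs_le_adjacent_binomial_poly:
  fixes s :: real
  assumes "s \<ge> 0" "i \<le> m"
  shows "(\<Sum>j\<in>{j\<in>{..m}. odd (i + j)}. real ((m choose i) * (m choose j)) * s ^ (i + j))
    \<le> adjacent_binomial_poly m s"
proof -
  define J where "J = {j\<in>{..m}. odd (i + j)}"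
  define t where "t k = real ((m choose k) * (m choose Suc k)) * s ^ (2 * k + 1)" for k
  have half: "i + j = 2 * ((i + j) div 2) + 1" if "j \<in> J" for j
    using that by (simp add: J_def)
  have "(\<Sum>j\<in>J. real ((m choose i) * (m choose j)) * s ^ (i + j)) \<le> (\<Sum>j\<in>J. t ((i + j) div 2))"
  proof (rule sum_mono)
    fix j assume "j \<in> J"
    then have "(m choose i) * (m choose j) \<le> (m choose ((i + j) div 2)) * (m choose Suc ((i + j) div 2))"
      by (intro binomial_mult_le_central half)
    then have "real ((m choose i) * (m choose j)) * s ^ (i + j)
        \<le> real ((m choose ((i + j) div 2)) * (m choose Suc ((i + j) div 2))) * s ^ (i + j)"
      using assms(1) by (intro mult_right_mono) (simp_all flip: of_nat_mult)
    then show "real ((m choose i) * (m choose j)) * s ^ (i + j) \<le> t ((i + j) div 2)"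
      unfolding t_def by (simp only: flip: half[OF \<open>j \<in> J\<close>])
  qed
  also have "\<dots> = (\<Sum>k\<in>(\<lambda>j. (i + j) div 2) ` J. t k)"
  proof -
    have "inj_on (\<lambda>j. (i + j) div 2) J"
      by (rule inj_onI) (metis half add_left_cancel)
    then show ?thesis
      by (simp add: sum.reindex)
  qed
  also have "\<dots> \<le> (\<Sum>k<m. t k)"
  proof (rule sum_mono2)
    show "(\<lambda>j. (i + j) div 2) ` J \<subseteq> {..<m}"
    proof
      fix k assume "k \<in> (\<lambda>j. (i + j) div 2) ` J"
      then obtain j where "j \<in> J" "k = (i + j) div 2"
        by blast
      moreover have "j \<le> m"
        using \<open>j \<in> J\<close> by (simp add: J_def)
      ultimately show "k \<in> {..<m}"
        using half[of j] assms(2) by simp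
    qed
  qed (simp_all add: t_def assms)
  finally show ?thesis
    unfolding J_def t_def adjacent_binomial_poly_def .
qed

lemma plus_minus_power_diff_le:
  fixes s :: real
  assumes "s \<ge> 0"
  shows "(1 + s) ^ (2 * m) - (1 - s) ^ (2 * m) \<le> 2 * (real m + 1) * adjacent_binomial_poly m s"
proof -
  have "(\<Sum>i\<le>m. \<Sum>j\<in>{j\<in>{..m}. odd (i + j)}. real ((m choose i) * (m choose j)) * s ^ (i + j))
      \<le> (\<Sum>i\<le>m. adjacent_binomial_poly m s)"
    using assms by (intro sum_mono odd_pairs_le_adjacent_binomial_poly) auto
  then show ?thesis
    unfolding plus_minus_power_diff_eq_odd_pairs by (simp add: algebra_simps)
qed

lemma plus_minus_power_diff_ge:
  fixes s :: real
  assumes "s \<ge> 0"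
  shows "4 * s * (1 + s) ^ (2 * n) \<le> (1 + s) ^ (2 * Suc n) - (1 - s) ^ (2 * Suc n)"
proof -
  have Suc_power: "t ^ (2 * Suc n) = t ^ (2 * n) * t ^ 2" for t :: real
    by (simp add: power_add[symmetric])
  have "(1 - s) ^ 2 \<le> (1 + s) ^ 2"
    using assms by (simp add: power2_eq_square algebra_simps)
  then have "(1 - s) ^ (2 * n) \<le> (1 + s) ^ (2 * n)"
    unfolding power_mult by (rule power_mono) simp
  then have "(1 - s) ^ (2 * n) * (1 - s) ^ 2 \<le> (1 + s) ^ (2 * n) * (1 - s) ^ 2"
    by (rule mult_right_mono) simp
  moreover have "(1 + s) ^ (2 * n) * (1 + s) ^ 2 = (1 + s) ^ (2 * n) * (1 - s) ^ 2 + 4 * s * (1 + s) ^ (2 * n)"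
    by (simp add: power2_eq_square algebra_simps)
  ultimately show ?thesis
    unfolding Suc_power by linarith
qed

lemma beta_square_ge:
  assumes "m \<ge> 1" "s \<ge> 0"
  shows "s ^ 2 / (2 * real m ^ 2 * (1 + s) ^ 3) * (1 + s) ^ (2 * m) \<le> beta m (s ^ 2)"
proof -
  obtain n where n: "m = Suc n"
    using assms(1) by (cases m) auto
  define Q where "Q = adjacent_binomial_poly m s"
  have Q: "Q \<ge> 0"
    unfolding Q_def using assms(2) by (rule adjacent_binomial_poly_nonneg)
  have key: "2 * s * (1 + s) ^ (2 * n) \<le> (real m + 1) * Q"
    using plus_minus_power_diff_ge[OF assms(2), of n] plus_minus_power_diff_le[OF assms(2), of m]
    unfolding Q_def n by linarith
  have m: "real m \<ge> 1"
    using assms(1) by simp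
  have "real m * s \<ge> 0"
    using assms(2) by simp
  then have m_bound: "real m + 1 \<le> 4 * real m * (1 + s)"
    using m by (simp add: algebra_simps)
  have cancel: "s ^ 2 / (2 * M ^ 2 * (A * B)) * (P * A) = s * (2 * s * P) / (4 * M ^ 2 * B)"
    if "A > 0" "B > 0" "M > 0" for A B M P :: real
    using that by (simp add: field_simps power2_eq_square)
  have "(1 + s) ^ (2 * m) = (1 + s) ^ (2 * n) * (1 + s) ^ 2"
    by (simp add: n power_add[symmetric])
  moreover have "(1 + s) ^ 3 = (1 + s) ^ 2 * (1 + s)"
    by (simp add: power2_eq_square power3_eq_cube)
  ultimately have "s ^ 2 / (2 * real m ^ 2 * (1 + s) ^ 3) * (1 + s) ^ (2 * m)
      = s * (2 * s * (1 + s) ^ (2 * n)) / (4 * real m ^ 2 * (1 + s))"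
    using cancel[of "(1 + s) ^ 2" "1 + s" "real m"] assms by simp
  also have "\<dots> \<le> s * ((real m + 1) * Q) / (4 * real m ^ 2 * (1 + s))"
    using key assms(2) by (intro divide_right_mono mult_left_mono) auto
  also have "\<dots> \<le> s * ((4 * real m * (1 + s)) * Q) / (4 * real m ^ 2 * (1 + s))"
    using assms(2) m_bound Q by (intro divide_right_mono mult_left_mono mult_right_mono) auto
  also have "\<dots> = s / real m * Q"
    using assms by (simp add: power2_eq_square)
  also have "\<dots> = beta m (s ^ 2)"
    by (simp add: beta_square_eq Q_def)
  finally show ?thesis .
qed

theorem lemma1:
  fixes m :: nat and x :: real
  assumes "m \<ge> 1" and "x > 0"
  shows "x / (2 * real m ^ 2 * (1 + sqrt x) ^ 3) * (1 + sqrt x) ^ (2 * m) \<le> beta m x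
         \<and> beta m x \<le> (1 + sqrt x) ^ (2 * m)"
proof -
  have "x = sqrt x ^ 2"
    using assms(2) by simp
  then show ?thesis
    using beta_square_ge[OF assms(1), of "sqrt x"] beta_square_le[of "sqrt x" m] assms(2)
    by simp
qed

end
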